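(* A strongly regular graph with parameters $(76,30,8,14)$ does not contain a $16$-coclique (a set of $16$ pairwise non-adjacent vertices) as an induced subgraph.
   Context: A graph is strongly regular with parameters $(v,k,\lambda,\mu)$ if it has $v$ vertices, is $k$-regular, adjacent vertices have exactly $\lambda$ common neighbours and distinct non-adjacent vertices have exactly $\mu$ common neighbours. *)

theory Defs
  imports Main
begin

definition simple_graph :: "'a set \<Rightarrow> ('a \<Rightarrow> 'a \<Rightarrow> bool) \<Rightarrow> bool" where
  "simple_graph V E \<longleftrightarrow> finite V \<and>
     (\<forall>x y. E x y \<longrightarrow> x \<in> V \<and> y \<in> V) \<and>
     (\<forall>x y. E x y \<longrightarrow> E y x) \<and> (\<forall>x. \<not> E x x)"

definition nbhd :: "'a set \<Rightarrow> ('a \<Rightarrow> 'a \<Rightarrow> bool) \<Rightarrow> 'a \<Rightarrow> 'a set" where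
  "nbhd V E x = {y \<in> V. E x y}"

definition strongly_regular ::
  "'a set \<Rightarrow> ('a \<Rightarrow> 'a \<Rightarrow> bool) \<Rightarrow> nat \<Rightarrow> nat \<Rightarrow> nat \<Rightarrow> nat \<Rightarrow> bool" where
  "strongly_regular V E v k lam mu \<longleftrightarrow> simple_graph V E \<and> card V = v \<and>
     (\<forall>x\<in>V. card (nbhd V E x) = k) \<and>
     (\<forall>x\<in>V. \<forall>y\<in>V. E x y \<longrightarrow> card (nbhd V E x \<inter> nbhd V E y) = lam) \<and>
     (\<forall>x\<in>V. \<forall>y\<in>V. x \<noteq> y \<longrightarrow> \<not> E x y \<longrightarrow> card (nbhd V E x \<inter> nbhd V E y) = mu)"

definition coclique :: "'a set \<Rightarrow> ('a \<Rightarrow> 'a \<Rightarrow> bool) \<Rightarrow> 'a set \<Rightarrow> bool" where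
  "coclique V E C \<longleftrightarrow> C \<subseteq> V \<and> (\<forall>x\<in>C. \<forall>y\<in>C. \<not> E x y)"

end

theory Submission
  imports Defs Complex_Main
begin

text \<open>
  Let C be a 16-coclique and D the remaining 60 vertices. Double counting shows that every
  vertex of D has exactly 8 neighbours in C. Off the all-ones direction the adjacency matrix A
  has eigenvalues 2 and -8, so 2I - A is positive semidefinite there. Evaluated on test vectors
  attached to the vertices of D, this forces q(x,y) = |N(x) \<inter> N(y) \<inter> C| + 2 [x ~ y] to be 4
  or 5 for distinct x, y, and makes q = 4 an equivalence relation whose classes K have 20
  vertices and induce 2-regular graphs.

  For x in K, the +1/-1 vector on C recording the adjacencies of x has Gram matrix 8 (2I - A_K);
  as these 20 vectors live in a 16-dimensional space, every cycle of K has length 4. Averaging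
  the sign vectors over antipodal pairs of these 4-cycles yields, by Bessel's inequality, that
  for each c in C exactly 10 vertices of K agree with their antipode at c. But these vertices
  form a union of 4-cycles, and 4 does not divide 10.
\<close>

section \<open>Finite sums and linear algebra\<close>

lemma sum_indicator_card:
  "finite A \<Longrightarrow> (\<Sum>x\<in>A. if P x then 1 else 0 :: real) = real (card {x\<in>A. P x})"
  by (simp add: sum.If_cases Int_def conj_commute)

lemma sum_delta_mult:
  "finite A \<Longrightarrow> x \<in> A \<Longrightarrow> (\<Sum>y\<in>A. (if y = x then 1 else 0) * F y) = (F x :: real)"
proof -
  assume "finite A" "x \<in> A"
  have "(\<Sum>y\<in>A. (if y = x then 1 else 0) * F y) = (\<Sum>y\<in>A. if y = x then F y else 0)"
    by (intro sum.cong) auto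
  with \<open>finite A\<close> \<open>x \<in> A\<close> show ?thesis by simp
qed

lemma sum_mult_delta:
  "finite A \<Longrightarrow> x \<in> A \<Longrightarrow> (\<Sum>y\<in>A. F y * (if y = x then 1 else 0)) = (F x :: real)"
  using sum_delta_mult[of A x F] by (simp add: mult.commute)

lemma card_2_eq_pair: "card S = 2 \<Longrightarrow> p \<in> S \<Longrightarrow> r \<in> S \<Longrightarrow> p \<noteq> r \<Longrightarrow> S = {p, r}"
  by (auto simp: card_2_iff)

lemma linear_relation_eliminate:
  fixes f :: "'i \<Rightarrow> 'c \<Rightarrow> real"
  assumes "finite I" "i0 \<in> I" "f i0 c0 \<noteq> 0"
    and rel: "\<And>c. c \<in> C \<Longrightarrow> (\<Sum>i\<in>I - {i0}. b i * (f i c - f i c0 / f i0 c0 * f i0 c)) = 0"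
    and c: "c \<in> insert c0 C"
  defines "b' \<equiv> b(i0 := - (\<Sum>j\<in>I - {i0}. b j * f j c0) / f i0 c0)"
  shows "(\<Sum>i\<in>I. b' i * f i c) = 0"
proof -
  let ?K = "\<Sum>j\<in>I - {i0}. b j * f j c0"
  have reduced: "(\<Sum>i\<in>I - {i0}. b i * (f i c - f i c0 / f i0 c0 * f i0 c)) = 0"
    using rel c \<open>f i0 c0 \<noteq> 0\<close> by auto
  have "?K * f i0 c / f i0 c0 = (\<Sum>i\<in>I - {i0}. b i * (f i c0 / f i0 c0 * f i0 c))"
    unfolding sum_distrib_right sum_divide_distrib by (intro sum.cong) auto
  then have "(\<Sum>i\<in>I - {i0}. b i * f i c)
      = (\<Sum>i\<in>I - {i0}. b i * (f i c - f i c0 / f i0 c0 * f i0 c)) + ?K * f i0 c / f i0 c0"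
    by (simp add: right_diff_distrib sum_subtractf)
  moreover have "(\<Sum>i\<in>I. b' i * f i c) = b' i0 * f i0 c + (\<Sum>i\<in>I - {i0}. b i * f i c)"
    using assms(1,2) unfolding b'_def by (simp add: sum.remove)
  ultimately show ?thesis using reduced unfolding b'_def by simp
qed

lemma exists_nontrivial_linear_relation:
  fixes f :: "'i \<Rightarrow> 'c \<Rightarrow> real"
  assumes "finite C" "finite I" "card C < card I"
  shows "\<exists>b. (\<exists>i\<in>I. b i \<noteq> 0) \<and> (\<forall>c\<in>C. (\<Sum>i\<in>I. b i * f i c) = 0)"
  using assms
proof (induction C arbitrary: I f rule: finite_induct)
  case empty
  then obtain i where "i \<in> I" by fastforce
  then show ?case by (intro exI[of _ "\<lambda>_. 1"]) auto
next
  case (insert c0 C)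
  show ?case
  proof (cases "\<forall>i\<in>I. f i c0 = 0")
    case True
    have "card C < card I" using insert by simp
    then obtain b where "\<exists>i\<in>I. b i \<noteq> 0" "\<forall>c\<in>C. (\<Sum>i\<in>I. b i * f i c) = 0"
      using insert.IH[OF insert.prems(1)] by blast
    with True show ?thesis by (intro exI[of _ b]) auto
  next
    case False
    then obtain i0 where i0: "i0 \<in> I" "f i0 c0 \<noteq> 0" by auto
    have "finite (I - {i0})" "card C < card (I - {i0})"
      using insert i0 by auto
    from insert.IH[OF this, of "\<lambda>i c. f i c - f i c0 / f i0 c0 * f i0 c"]
    obtain b where b: "\<exists>i\<in>I - {i0}. b i \<noteq> 0"
      "\<forall>c\<in>C. (\<Sum>i\<in>I - {i0}. b i * (f i c - f i c0 / f i0 c0 * f i0 c)) = 0"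
      by blast
    let ?b' = "b(i0 := - (\<Sum>j\<in>I - {i0}. b j * f j c0) / f i0 c0)"
    have "\<exists>i\<in>I. ?b' i \<noteq> 0" using b(1) by auto
    moreover have "\<forall>c\<in>insert c0 C. (\<Sum>i\<in>I. ?b' i * f i c) = 0"
      using linear_relation_eliminate[of I i0 f c0 C b] insert.prems(1) i0 b(2) by blast
    ultimately show ?thesis by blast
  qed
qed

lemma reproducing_family_inner:
  fixes w :: "'i \<Rightarrow> 'c \<Rightarrow> real" and wt :: "'i \<Rightarrow> real" and u :: "'c \<Rightarrow> real"
  assumes reproducing: "\<And>i c. i \<in> I \<Longrightarrow> c \<in> C \<Longrightarrow>
      (\<Sum>j\<in>I. wt j * (\<Sum>d\<in>C. w i d * w j d) * w j c) = w i c"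
    and "i \<in> I"
  shows "(\<Sum>c\<in>C. (\<Sum>j\<in>I. wt j * (\<Sum>d\<in>C. u d * w j d) * w j c) * w i c)
    = (\<Sum>c\<in>C. u c * w i c)"
proof -
  have "(\<Sum>c\<in>C. (\<Sum>j\<in>I. wt j * (\<Sum>d\<in>C. u d * w j d) * w j c) * w i c)
      = (\<Sum>j\<in>I. \<Sum>c\<in>C. wt j * (\<Sum>d\<in>C. u d * w j d) * w j c * w i c)"
    unfolding sum_distrib_right by (rule sum.swap)
  also have "\<dots> = (\<Sum>j\<in>I. wt j * (\<Sum>d\<in>C. w i d * w j d) * (\<Sum>c\<in>C. u c * w j c))"
    by (intro sum.cong refl) (simp add: sum_distrib_left algebra_simps)
  also have "\<dots> = (\<Sum>c\<in>C. u c * (\<Sum>j\<in>I. wt j * (\<Sum>d\<in>C. w i d * w j d) * w j c))"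
    unfolding sum_distrib_left by (subst sum.swap) (simp add: algebra_simps)
  also have "\<dots> = (\<Sum>c\<in>C. u c * w i c)"
    by (intro sum.cong refl) (simp add: reproducing \<open>i \<in> I\<close>)
  finally show ?thesis .
qed

lemma bessel_inequality_reproducing:
  fixes w :: "'i \<Rightarrow> 'c \<Rightarrow> real" and wt :: "'i \<Rightarrow> real" and u :: "'c \<Rightarrow> real"
  assumes "finite C" "finite I"
    and reproducing: "\<And>i c. i \<in> I \<Longrightarrow> c \<in> C \<Longrightarrow>
      (\<Sum>j\<in>I. wt j * (\<Sum>d\<in>C. w i d * w j d) * w j c) = w i c"
  shows "(\<Sum>i\<in>I. wt i * (\<Sum>c\<in>C. u c * w i c)\<^sup>2) \<le> (\<Sum>c\<in>C. (u c)\<^sup>2)"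
proof -
  define coef where "coef i = (\<Sum>c\<in>C. u c * w i c)" for i
  define P where "P c = (\<Sum>i\<in>I. wt i * coef i * w i c)" for c
  define \<beta> where "\<beta> = (\<Sum>i\<in>I. wt i * (coef i)\<^sup>2)"
  have P_w: "(\<Sum>c\<in>C. P c * w i c) = coef i" if "i \<in> I" for i
    unfolding P_def coef_def by (rule reproducing_family_inner[OF reproducing that])
  have "(\<Sum>c\<in>C. u c * P c) = (\<Sum>i\<in>I. wt i * coef i * (\<Sum>c\<in>C. u c * w i c))"
    unfolding P_def sum_distrib_left by (subst sum.swap) (simp add: algebra_simps)
  then have uP: "(\<Sum>c\<in>C. u c * P c) = \<beta>"
    unfolding \<beta>_def coef_def by (simp add: power2_eq_square algebra_simps)
  have "(\<Sum>c\<in>C. P c * P c) = (\<Sum>i\<in>I. wt i * coef i * (\<Sum>c\<in>C. P c * w i c))"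
    unfolding P_def[of c for c] sum_distrib_left sum_distrib_right
    by (subst sum.swap) (simp add: algebra_simps)
  also have "\<dots> = \<beta>" unfolding \<beta>_def by (intro sum.cong refl) (simp add: P_w power2_eq_square)
  finally have PP: "(\<Sum>c\<in>C. P c * P c) = \<beta>" .
  have "0 \<le> (\<Sum>c\<in>C. (u c - P c)\<^sup>2)" by (intro sum_nonneg) simp
  also have "\<dots> = (\<Sum>c\<in>C. (u c)\<^sup>2) - 2 * (\<Sum>c\<in>C. u c * P c) + (\<Sum>c\<in>C. P c * P c)"
    by (simp add: power2_eq_square algebra_simps sum.distrib sum_subtractf sum_distrib_left)
  finally show ?thesis using uP PP unfolding \<beta>_def coef_def by simp
qed

lemma sum_symmetric_quadratic_form:
  fixes M :: "'a \<Rightarrow> 'a \<Rightarrow> real"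
  assumes sym: "\<And>x y. M x y = M y x"
  shows "2 * (\<Sum>x\<in>X. \<Sum>y\<in>X. M x y * b x * b y)
    = 2 * (\<Sum>x\<in>X. (\<Sum>y\<in>X. M x y) * (b x)\<^sup>2) - (\<Sum>x\<in>X. \<Sum>y\<in>X. M x y * (b x - b y)\<^sup>2)"
proof -
  have swap: "(\<Sum>x\<in>X. \<Sum>y\<in>X. M x y * (b y)\<^sup>2) = (\<Sum>x\<in>X. (\<Sum>y\<in>X. M x y) * (b x)\<^sup>2)"
    by (subst sum.swap) (simp add: sym sum_distrib_right)
  have "(\<Sum>x\<in>X. \<Sum>y\<in>X. M x y * (b x - b y)\<^sup>2)
      = (\<Sum>x\<in>X. \<Sum>y\<in>X. M x y * (b x)\<^sup>2) + (\<Sum>x\<in>X. \<Sum>y\<in>X. M x y * (b y)\<^sup>2)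
        - 2 * (\<Sum>x\<in>X. \<Sum>y\<in>X. M x y * b x * b y)"
    by (simp add: power2_eq_square algebra_simps sum.distrib sum_subtractf sum_distrib_left)
  moreover have "(\<Sum>x\<in>X. \<Sum>y\<in>X. M x y * (b x)\<^sup>2) = (\<Sum>x\<in>X. (\<Sum>y\<in>X. M x y) * (b x)\<^sup>2)"
    by (simp add: sum_distrib_right)
  ultimately show ?thesis using swap by linarith
qed

section \<open>Strongly regular graphs\<close>

locale strongly_regular_graph =
  fixes V :: "'a set" and E :: "'a \<Rightarrow> 'a \<Rightarrow> bool" and n k lam mu :: nat
  assumes srg: "strongly_regular V E n k lam mu"
begin

lemma finite_V: "finite V"
  and adj_sym: "E x y \<Longrightarrow> E y x"
  and not_adj_self: "\<not> E x x"
  and card_V: "card V = n"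
  using srg unfolding strongly_regular_def simple_graph_def by auto

definition adj :: "'a \<Rightarrow> 'a \<Rightarrow> real" where
  "adj x y = (if E x y then 1 else 0)"

lemma adj_commute: "adj x y = adj y x"
  unfolding adj_def using adj_sym by auto

lemma adj_self [simp]: "adj x x = 0"
  unfolding adj_def using not_adj_self by simp

lemma adj_squared [simp]: "adj x y * adj x y = adj x y"
  unfolding adj_def by simp

lemma adj_nonneg: "0 \<le> adj x y"
  unfolding adj_def by simp

lemma sum_adj_card: "finite A \<Longrightarrow> (\<Sum>y\<in>A. adj x y) = real (card {y\<in>A. E x y})"
  unfolding adj_def by (rule sum_indicator_card)

lemma sum_adj: "x \<in> V \<Longrightarrow> (\<Sum>y\<in>V. adj x y) = k"
proof -
  assume "x \<in> V"
  have "{y\<in>V. E x y} = nbhd V E x" unfolding nbhd_def by auto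
  with \<open>x \<in> V\<close> show ?thesis
    using srg sum_adj_card[OF finite_V] unfolding strongly_regular_def by simp
qed

lemma card_common_nbhd:
  assumes "x \<in> V" "y \<in> V"
  shows "card (nbhd V E x \<inter> nbhd V E y) = (if x = y then k else if E x y then lam else mu)"
  using srg assms unfolding strongly_regular_def by auto

lemma sum_adj_adj:
  assumes "x \<in> V" "y \<in> V"
  shows "(\<Sum>z\<in>V. adj x z * adj z y)
    = (real k - mu) * (if x = y then 1 else 0) + (real lam - mu) * adj x y + mu"
proof -
  have "(\<Sum>z\<in>V. adj x z * adj z y) = (\<Sum>z\<in>V. if E x z \<and> E y z then 1 else 0)"
    unfolding adj_def using adj_sym by (intro sum.cong) auto
  also have "\<dots> = real (card {z\<in>V. E x z \<and> E y z})"
    by (rule sum_indicator_card[OF finite_V])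
  also have "{z\<in>V. E x z \<and> E y z} = nbhd V E x \<inter> nbhd V E y"
    unfolding nbhd_def by auto
  finally show ?thesis
    using card_common_nbhd[OF assms] not_adj_self[of x] unfolding adj_def by auto
qed

definition dot :: "('a \<Rightarrow> real) \<Rightarrow> ('a \<Rightarrow> real) \<Rightarrow> real" where
  "dot f h = (\<Sum>w\<in>V. f w * h w)"

definition total :: "('a \<Rightarrow> real) \<Rightarrow> real" where
  "total f = (\<Sum>w\<in>V. f w)"

definition adj_form :: "('a \<Rightarrow> real) \<Rightarrow> ('a \<Rightarrow> real) \<Rightarrow> real" where
  "adj_form f h = (\<Sum>w\<in>V. \<Sum>u\<in>V. f w * adj w u * h u)"

lemma norm_adj_apply:
  "(\<Sum>w\<in>V. (\<Sum>u\<in>V. adj w u * f u)\<^sup>2)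
    = (real k - mu) * dot f f + (real lam - mu) * adj_form f f + mu * (total f)\<^sup>2"
proof -
  have "(\<Sum>w\<in>V. (\<Sum>u\<in>V. adj w u * f u)\<^sup>2)
      = (\<Sum>u\<in>V. \<Sum>u'\<in>V. f u * f u' * (\<Sum>w\<in>V. adj u w * adj w u'))"
  proof -
    have "(\<Sum>w\<in>V. (\<Sum>u\<in>V. adj w u * f u)\<^sup>2)
        = (\<Sum>w\<in>V. \<Sum>u\<in>V. \<Sum>u'\<in>V. f u * f u' * (adj u w * adj w u'))"
      unfolding power2_eq_square by (simp add: sum_product adj_commute algebra_simps)
    also have "\<dots> = (\<Sum>u\<in>V. \<Sum>u'\<in>V. \<Sum>w\<in>V. f u * f u' * (adj u w * adj w u'))"
      by (subst sum.swap) (subst (2) sum.swap, simp)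
    finally show ?thesis by (simp add: sum_distrib_left)
  qed
  also have "\<dots> = (\<Sum>u\<in>V. \<Sum>u'\<in>V. (real k - mu) * (f u * (if u' = u then 1 else 0) * f u')
      + (real lam - mu) * (f u * adj u u' * f u') + mu * (f u * f u'))"
    by (intro sum.cong refl) (auto simp: sum_adj_adj algebra_simps)
  also have "\<dots> = (real k - mu) * (\<Sum>u\<in>V. \<Sum>u'\<in>V. f u * (if u' = u then 1 else 0) * f u')
      + (real lam - mu) * adj_form f f + mu * (\<Sum>u\<in>V. \<Sum>u'\<in>V. f u * f u')"
    unfolding adj_form_def by (simp only: sum.distrib sum_distrib_left)
  also have "(\<Sum>u\<in>V. \<Sum>u'\<in>V. f u * (if u' = u then 1 else 0) * f u') = dot f f"
    unfolding dot_def using finite_V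
    by (intro sum.cong refl) (simp add: mult.assoc sum_delta_mult flip: sum_distrib_left)
  also have "(\<Sum>u\<in>V. \<Sum>u'\<in>V. f u * f u') = (total f)\<^sup>2"
    unfolding total_def power2_eq_square by (rule sum_product[symmetric])
  finally show ?thesis .
qed

lemma adj_form_bound:
  fixes t :: real
  shows "(2 * t - (real lam - mu)) * adj_form f f \<le> (t\<^sup>2 + k - mu) * dot f f + mu * (total f)\<^sup>2"
proof -
  have "0 \<le> (\<Sum>w\<in>V. (t * f w - (\<Sum>u\<in>V. adj w u * f u))\<^sup>2)"
    by (intro sum_nonneg) simp
  also have "\<dots> = t\<^sup>2 * dot f f - 2 * t * adj_form f f + (\<Sum>w\<in>V. (\<Sum>u\<in>V. adj w u * f u)\<^sup>2)"
    unfolding dot_def adj_form_def power2_eq_square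
    by (simp add: algebra_simps sum.distrib sum_subtractf sum_distrib_left)
  finally show ?thesis unfolding norm_adj_apply by (simp add: algebra_simps)
qed

lemma dot_commute: "dot f h = dot h f"
  unfolding dot_def by (simp add: mult.commute)

lemma adj_form_commute: "adj_form f h = adj_form h f"
  unfolding adj_form_def by (subst sum.swap) (simp add: adj_commute algebra_simps)

lemma bilinear_simps:
  "dot (\<lambda>w. f1 w + f2 w) h = dot f1 h + dot f2 h"
  "dot h (\<lambda>w. f1 w + f2 w) = dot h f1 + dot h f2"
  "dot (\<lambda>w. c * f w) h = c * dot f h"
  "dot h (\<lambda>w. c * f w) = c * dot h f"
  "adj_form (\<lambda>w. f1 w + f2 w) h = adj_form f1 h + adj_form f2 h"
  "adj_form h (\<lambda>w. f1 w + f2 w) = adj_form h f1 + adj_form h f2"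
  "adj_form (\<lambda>w. c * f w) h = c * adj_form f h"
  "adj_form h (\<lambda>w. c * f w) = c * adj_form h f"
  "total (\<lambda>w. f1 w + f2 w) = total f1 + total f2"
  "total (\<lambda>w. c * f w) = c * total f"
  unfolding dot_def adj_form_def total_def
  by (simp_all add: algebra_simps sum.distrib sum_distrib_left)

end

section \<open>The vertices outside a 16-coclique\<close>

locale srg_coclique = strongly_regular_graph V E 76 30 8 14 for V :: "'a set" and E +
  fixes C :: "'a set"
  assumes coclique: "coclique V E C" and card_C: "card C = 16"
begin

lemma C_subset_V: "C \<subseteq> V"
  and adj_C: "x \<in> C \<Longrightarrow> y \<in> C \<Longrightarrow> adj x y = 0"
  using coclique unfolding coclique_def adj_def by auto

lemma finite_C: "finite C"
  using C_subset_V finite_V finite_subset by blast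

lemma C_nonempty: "C \<noteq> {}"
  using card_C by auto

definition D :: "'a set" where
  "D = V - C"

lemma finite_D: "finite D"
  unfolding D_def using finite_V by simp

lemma card_D: "card D = 60"
  unfolding D_def using card_V card_C C_subset_V finite_V
  by (simp add: card_Diff_subset finite_subset)

lemma D_subset_V: "x \<in> D \<Longrightarrow> x \<in> V"
  and D_not_C: "x \<in> D \<Longrightarrow> x \<notin> C"
  unfolding D_def by auto

lemma sum_D: "(\<Sum>x\<in>D. f x) = (\<Sum>x\<in>V. f x) - (\<Sum>x\<in>C. f x :: real)"
  unfolding D_def by (rule sum_diff[OF finite_V C_subset_V])

lemma sum_D_adj_C: "c \<in> C \<Longrightarrow> (\<Sum>x\<in>D. adj x c) = 30"
  using sum_adj[of c] C_subset_V by (auto simp: sum_D adj_C adj_commute)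

lemma sum_D_adj_adj_C:
  "c \<in> C \<Longrightarrow> c' \<in> C \<Longrightarrow> (\<Sum>x\<in>D. adj c x * adj x c') = (if c = c' then 30 else 14)"
  using sum_adj_adj[of c c'] subsetD[OF C_subset_V] by (auto simp: sum_D adj_C)

definition C_degree :: "'a \<Rightarrow> real" where
  "C_degree x = (\<Sum>c\<in>C. adj x c)"

lemma sum_C_degree: "(\<Sum>x\<in>D. C_degree x) = 480"
proof -
  have "(\<Sum>x\<in>D. C_degree x) = (\<Sum>c\<in>C. \<Sum>x\<in>D. adj x c)"
    unfolding C_degree_def by (rule sum.swap)
  also have "\<dots> = (\<Sum>c\<in>C. 30)" by (intro sum.cong refl) (simp add: sum_D_adj_C)
  finally show ?thesis using card_C by simp
qed

lemma sum_C_degree_squared: "(\<Sum>x\<in>D. (C_degree x)\<^sup>2) = 3840"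
proof -
  have "(\<Sum>x\<in>D. (C_degree x)\<^sup>2) = (\<Sum>c\<in>C. \<Sum>c'\<in>C. \<Sum>x\<in>D. adj c x * adj x c')"
    unfolding C_degree_def power2_eq_square sum_product
    by (subst sum.swap, subst (2) sum.swap) (simp add: adj_commute mult.commute)
  also have "\<dots> = (\<Sum>c\<in>C. 14 * 16 + 16)"
  proof (intro sum.cong refl)
    fix c assume "c \<in> C"
    have "(\<Sum>c'\<in>C. \<Sum>x\<in>D. adj c x * adj x c') = (\<Sum>c'\<in>C. 14 + (if c' = c then 16 else 0))"
      using \<open>c \<in> C\<close> by (intro sum.cong refl) (auto simp: sum_D_adj_adj_C)
    also have "\<dots> = 14 * 16 + 16"
      using card_C finite_C \<open>c \<in> C\<close> by (simp add: sum.distrib sum.delta)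
    finally show "(\<Sum>c'\<in>C. \<Sum>x\<in>D. adj c x * adj x c') = 14 * 16 + 16" .
  qed
  finally show ?thesis using card_C by simp
qed

text \<open>The C-degrees on D have mean 8 and variance 0.\<close>
lemma C_degree_eq: "x \<in> D \<Longrightarrow> C_degree x = 8"
proof -
  have "(\<Sum>x\<in>D. (C_degree x - 8)\<^sup>2)
      = (\<Sum>x\<in>D. (C_degree x)\<^sup>2) - 16 * (\<Sum>x\<in>D. C_degree x) + (\<Sum>x\<in>D. 64)"
    by (simp add: power2_eq_square algebra_simps sum.distrib sum_subtractf sum_distrib_left)
  also have "\<dots> = 0" using sum_C_degree sum_C_degree_squared card_D by simp
  finally show "x \<in> D \<Longrightarrow> C_degree x = 8"
    using sum_nonneg_eq_0_iff[OF finite_D, of "\<lambda>x. (C_degree x - 8)\<^sup>2"] by simp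
qed

lemma sum_D_adj: "x \<in> D \<Longrightarrow> (\<Sum>y\<in>D. adj x y) = 22"
  using sum_adj[OF D_subset_V] C_degree_eq unfolding C_degree_def by (simp add: sum_D)

definition common :: "'a \<Rightarrow> 'a \<Rightarrow> real" where
  "common x y = (\<Sum>c\<in>C. adj x c * adj y c)"

lemma common_commute: "common x y = common y x"
  unfolding common_def by (simp add: mult.commute)

lemma common_self: "x \<in> D \<Longrightarrow> common x x = 8"
  using C_degree_eq unfolding common_def C_degree_def by simp

lemma common_card: "common x y = real (card {c\<in>C. E x c \<and> E y c})"
proof -
  have "common x y = (\<Sum>c\<in>C. if E x c \<and> E y c then 1 else 0)"
    unfolding common_def adj_def by (intro sum.cong) auto
  then show ?thesis by (simp add: sum_indicator_card[OF finite_C])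
qed

text \<open>Off the all-ones direction the adjacency matrix has the eigenvalues 2 and -8.\<close>
lemma form_nonneg_on_sum_zero:
  assumes "total f = 0"
  shows "0 \<le> 2 * dot f f - adj_form f f"
  using adj_form_bound[of 2 f] assms by simp

definition delta :: "'a \<Rightarrow> 'a \<Rightarrow> real" where
  "delta x w = (if w = x then 1 else 0)"

definition C_part :: "'a \<Rightarrow> 'a \<Rightarrow> real" where
  "C_part x w = (if w \<in> C then 15 * adj x w - 7 else 0)"

definition one :: "'a \<Rightarrow> real" where
  "one w = 1"

text \<open>The coefficients make the probes of vertices of D sum to zero and make their Gram entries
  under 2I - A depend on x and y only through q x y.\<close>
definition probe :: "'a \<Rightarrow> 'a \<Rightarrow> real" where
  "probe x = (\<lambda>w. 30 * delta x w + C_part x w + (-1/2) * one w)"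

definition q :: "'a \<Rightarrow> 'a \<Rightarrow> real" where
  "q x y = common x y + 2 * adj x y"

definition gram :: "'a \<Rightarrow> 'a \<Rightarrow> real" where
  "gram x y = 2 * dot (probe x) (probe y) - adj_form (probe x) (probe y)"

lemma sum_V_C_part: "(\<Sum>w\<in>V. if w \<in> C then F w else 0) = (\<Sum>w\<in>C. F w :: real)"
  using finite_V C_subset_V by (simp add: sum.If_cases Int_absorb1)

lemma total_delta: "x \<in> V \<Longrightarrow> total (delta x) = 1"
  unfolding total_def delta_def using finite_V by simp

lemma total_C_part: "x \<in> D \<Longrightarrow> total (C_part x) = 8"
proof -
  assume "x \<in> D"
  have "total (C_part x) = (\<Sum>c\<in>C. 15 * adj x c - 7)"
    unfolding total_def C_part_def by (rule sum_V_C_part)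
  also have "\<dots> = 15 * C_degree x - 7 * 16"
    unfolding C_degree_def using card_C by (simp add: sum_subtractf sum_distrib_left)
  finally show ?thesis using C_degree_eq[OF \<open>x \<in> D\<close>] by simp
qed

lemma total_one: "total one = 76"
  unfolding total_def one_def using card_V by simp

lemma total_probe: "x \<in> D \<Longrightarrow> total (probe x) = 0"
  unfolding probe_def by (simp only: bilinear_simps)
    (simp add: total_delta total_C_part total_one D_subset_V)

lemma dot_delta_left: "x \<in> V \<Longrightarrow> dot (delta x) f = f x"
  unfolding dot_def delta_def using finite_V by (rule sum_delta_mult)

lemma dot_delta_right: "x \<in> V \<Longrightarrow> dot f (delta x) = f x"
  using dot_delta_left dot_commute by metis

lemma delta_commute: "delta x y = delta y x"
  unfolding delta_def by simp

lemma dot_one: "dot f one = total f"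
  and dot_one': "dot one f = total f"
  unfolding dot_def total_def one_def by simp_all

lemma C_part_D: "y \<in> D \<Longrightarrow> C_part x y = 0"
  unfolding C_part_def D_def by auto

lemma dot_C_part: "x \<in> D \<Longrightarrow> y \<in> D \<Longrightarrow> dot (C_part x) (C_part y) = 225 * common x y - 896"
proof -
  assume "x \<in> D" "y \<in> D"
  have "dot (C_part x) (C_part y) = (\<Sum>c\<in>C. (15 * adj x c - 7) * (15 * adj y c - 7))"
    unfolding dot_def C_part_def by (subst sum_V_C_part[symmetric]) (intro sum.cong, auto)
  also have "\<dots> = (\<Sum>c\<in>C. 225 * (adj x c * adj y c) - 105 * adj x c - 105 * adj y c + 49)"
    by (intro sum.cong) (auto simp: algebra_simps)
  also have "\<dots> = 225 * common x y - 105 * C_degree x - 105 * C_degree y + 49 * 16"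
    unfolding common_def C_degree_def using card_C
    by (simp add: sum.distrib sum_subtractf sum_distrib_left)
  finally show ?thesis using C_degree_eq \<open>x \<in> D\<close> \<open>y \<in> D\<close> by simp
qed

lemma adj_form_delta: "x \<in> V \<Longrightarrow> adj_form (delta x) f = (\<Sum>u\<in>V. adj x u * f u)"
proof -
  assume "x \<in> V"
  have "adj_form (delta x) f = (\<Sum>w\<in>V. delta x w * (\<Sum>u\<in>V. adj w u * f u))"
    unfolding adj_form_def by (simp add: sum_distrib_left mult.assoc)
  also have "\<dots> = (\<Sum>u\<in>V. adj x u * f u)"
    unfolding delta_def using finite_V \<open>x \<in> V\<close> by (rule sum_delta_mult)
  finally show ?thesis .
qed

lemma adj_form_delta_delta: "x \<in> V \<Longrightarrow> y \<in> V \<Longrightarrow> adj_form (delta x) (delta y) = adj x y"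
  unfolding adj_form_delta delta_def using finite_V by (simp add: sum_mult_delta)

lemma adj_form_one: "adj_form f one = 30 * total f"
proof -
  have "adj_form f one = (\<Sum>w\<in>V. f w * (\<Sum>u\<in>V. adj w u))"
    unfolding adj_form_def one_def by (simp add: sum_distrib_left)
  also have "\<dots> = (\<Sum>w\<in>V. f w * 30)" by (intro sum.cong refl) (simp add: sum_adj)
  finally show ?thesis unfolding total_def by (simp add: sum_distrib_right mult.commute)
qed

lemma adj_form_one': "adj_form one f = 30 * total f"
  using adj_form_one adj_form_commute by metis

lemma adj_form_C_part: "adj_form (C_part x) (C_part y) = 0"
proof -
  have "C_part x w * adj w u * C_part y u = 0" for w u
    unfolding C_part_def using adj_C by auto
  then show ?thesis unfolding adj_form_def by (simp del: mult_eq_0_iff)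
qed

lemma adj_form_delta_C_part:
  "x \<in> D \<Longrightarrow> y \<in> D \<Longrightarrow> adj_form (delta x) (C_part y) = 15 * common x y - 56"
proof -
  assume "x \<in> D" "y \<in> D"
  have "adj_form (delta x) (C_part y) = (\<Sum>u\<in>V. if u \<in> C then adj x u * (15 * adj y u - 7) else 0)"
    unfolding adj_form_delta[OF D_subset_V[OF \<open>x \<in> D\<close>]] C_part_def by (intro sum.cong) auto
  also have "\<dots> = 15 * common x y - 7 * C_degree x"
    unfolding sum_V_C_part common_def C_degree_def
    by (simp add: algebra_simps sum_subtractf sum_distrib_left)
  finally show ?thesis using C_degree_eq[OF \<open>x \<in> D\<close>] by simp
qed

lemma gram_eq:
  assumes x: "x \<in> D" and y: "y \<in> D"
  shows "gram x y = (if x = y then 300 else 150 * (14 - 3 * q x y))"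
proof -
  note xV = D_subset_V[OF x] and yV = D_subset_V[OF y]
  have dot: "dot (probe x) (probe y) = 900 * delta y x + 225 * common x y - 915"
    unfolding probe_def
    by (simp only: bilinear_simps)
      (simp add: dot_delta_left dot_delta_right dot_one dot_one' dot_C_part x y xV yV
        C_part_D total_delta total_C_part total_one delta_commute[of x y] algebra_simps)
  have form: "adj_form (probe x) (probe y) = 900 * adj x y + 900 * common x y - 3930"
    unfolding probe_def
    by (simp only: bilinear_simps)
      (simp add: adj_form_delta_delta adj_form_one adj_form_one' adj_form_C_part
        adj_form_delta_C_part x y xV yV adj_form_commute[of "C_part x" "delta y"]
        common_commute[of y x] total_delta total_C_part total_one bilinear_simps algebra_simps)
  show ?thesis
    using dot form common_self[OF x] unfolding gram_def q_def delta_def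
    by (auto simp: algebra_simps)
qed

lemma gram_psd3:
  assumes "x \<in> D" "y \<in> D" "z \<in> D"
  shows "0 \<le> a\<^sup>2 * gram x x + b\<^sup>2 * gram y y + c\<^sup>2 * gram z z
    + 2 * a * b * gram x y + 2 * a * c * gram x z + 2 * b * c * gram y z"
proof -
  define f where "f = (\<lambda>w. a * probe x w + b * probe y w + c * probe z w)"
  have "total f = 0"
    unfolding f_def by (simp only: bilinear_simps) (simp add: total_probe assms)
  then have "0 \<le> 2 * dot f f - adj_form f f" by (rule form_nonneg_on_sum_zero)
  also have "2 * dot f f - adj_form f f = a\<^sup>2 * gram x x + b\<^sup>2 * gram y y + c\<^sup>2 * gram z z
      + 2 * a * b * gram x y + 2 * a * c * gram x z + 2 * b * c * gram y z"
    unfolding f_def gram_def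
    by (simp only: bilinear_simps)
      (simp add: dot_commute[of "probe y" "probe x"] dot_commute[of "probe z" "probe x"]
        dot_commute[of "probe z" "probe y"] adj_form_commute[of "probe y" "probe x"]
        adj_form_commute[of "probe z" "probe x"] adj_form_commute[of "probe z" "probe y"]
        power2_eq_square algebra_simps)
  finally show ?thesis .
qed

lemma q_commute: "q x y = q y x"
  unfolding q_def by (simp add: adj_commute common_commute)

lemma q_cases:
  assumes x: "x \<in> D" and y: "y \<in> D" and "x \<noteq> y"
  shows "q x y = 4 \<or> q x y = 5"
proof -
  have "0 \<le> 600 + 2 * (150 * (14 - 3 * q x y))" "0 \<le> 600 - 2 * (150 * (14 - 3 * q x y))"
    using gram_psd3[OF x y x, of 1 1 0] gram_psd3[OF x y x, of 1 "-1" 0]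
    by (simp_all add: gram_eq x y \<open>x \<noteq> y\<close>)
  moreover obtain m :: nat where m: "q x y = real m"
  proof
    show "q x y = real (card {c\<in>C. E x c \<and> E y c} + (if E x y then 2 else 0))"
      unfolding q_def common_card adj_def by simp
  qed
  ultimately have "12 \<le> 3 * real m" "3 * real m \<le> 16" by simp_all
  then have "4 \<le> m" "m < 6" by linarith+
  then show ?thesis using m by auto
qed

text \<open>If q x y = 4, the Gram entry of x and y equals the diagonal entries, so the probes of x
  and y cannot be told apart by the form.\<close>
lemma q_eq_4_trans:
  assumes x: "x \<in> D" and y: "y \<in> D" and z: "z \<in> D"
    and "x \<noteq> y" "x \<noteq> z" "y \<noteq> z" and "q x y = 4"
  shows "q x z = q y z"
proof -
  define t where "t = q x z - q y z"
  have "0 \<le> 600 + 300 * t\<^sup>2 - 300 * (14 - 3 * q x y)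
      + 300 * t * (14 - 3 * q x z) - 300 * t * (14 - 3 * q y z)"
    using gram_psd3[OF x y z, of 1 "-1" t] assms by (simp add: gram_eq algebra_simps)
  then have "t\<^sup>2 \<le> 0" unfolding t_def using \<open>q x y = 4\<close> by (simp add: power2_eq_square algebra_simps)
  then show ?thesis unfolding t_def by simp
qed

lemma sum_D_common: "x \<in> D \<Longrightarrow> (\<Sum>y\<in>D. common x y) = 240"
proof -
  assume "x \<in> D"
  have "(\<Sum>y\<in>D. common x y) = (\<Sum>c\<in>C. adj x c * (\<Sum>y\<in>D. adj y c))"
    unfolding common_def by (subst sum.swap) (simp add: sum_distrib_left)
  also have "\<dots> = 30 * C_degree x"
    unfolding C_degree_def by (simp add: sum_D_adj_C sum_distrib_right mult.commute)
  finally show ?thesis using C_degree_eq[OF \<open>x \<in> D\<close>] by simp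
qed

lemma sum_D_adj_common: "x \<in> D \<Longrightarrow> (\<Sum>y\<in>D. adj x y * common x y) = 64"
proof -
  assume x: "x \<in> D"
  have "(\<Sum>y\<in>D. adj x y * common x y) = (\<Sum>c\<in>C. adj x c * (\<Sum>y\<in>D. adj x y * adj y c))"
    unfolding common_def sum_distrib_left by (subst sum.swap) (simp add: mult.left_commute)
  also have "\<dots> = (\<Sum>c\<in>C. 8 * adj x c)"
  proof (intro sum.cong refl)
    fix c assume c: "c \<in> C"
    have "(\<Sum>y\<in>D. adj x y * adj y c) = 16 * (if x = c then 1 else 0) - 6 * adj x c + 14"
      using sum_adj_adj[OF D_subset_V[OF x] subsetD[OF C_subset_V c]] c
      by (simp add: sum_D adj_C)
    then show "adj x c * (\<Sum>y\<in>D. adj x y * adj y c) = 8 * adj x c"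
      using D_not_C[OF x] c by (auto simp: adj_def)
  qed
  also have "\<dots> = 8 * C_degree x"
    unfolding C_degree_def by (simp add: sum_distrib_left)
  finally show ?thesis using C_degree_eq[OF x] by simp
qed

lemma card_adj_common_2:
  assumes x: "x \<in> D"
  shows "card {y\<in>D. E x y \<and> common x y = 2} = 2"
proof -
  have "(\<Sum>y\<in>D. adj x y * (3 - common x y)) = (\<Sum>y\<in>D. if E x y \<and> common x y = 2 then 1 else 0)"
  proof (intro sum.cong refl)
    fix y assume y: "y \<in> D"
    show "adj x y * (3 - common x y) = (if E x y \<and> common x y = 2 then 1 else 0)"
      using q_cases[OF x y] not_adj_self[of x] unfolding q_def adj_def by (cases "x = y") auto
  qed
  also have "\<dots> = real (card {y\<in>D. E x y \<and> common x y = 2})"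
    by (rule sum_indicator_card[OF finite_D])
  finally have "real (card {y\<in>D. E x y \<and> common x y = 2})
      = 3 * (\<Sum>y\<in>D. adj x y) - (\<Sum>y\<in>D. adj x y * common x y)"
    by (simp add: algebra_simps sum_subtractf sum_distrib_left)
  then show ?thesis using sum_D_adj[OF x] sum_D_adj_common[OF x] by simp
qed

lemma card_nonadj_common_4:
  assumes x: "x \<in> D"
  shows "card {y\<in>D. y \<noteq> x \<and> \<not> E x y \<and> common x y = 4} = 17"
proof -
  define b where "b y = 1 - adj x y - (if y = x then 1 else 0)" for y
  have "(\<Sum>y\<in>D. b y * (5 - common x y))
      = (\<Sum>y\<in>D. if y \<noteq> x \<and> \<not> E x y \<and> common x y = 4 then 1 else 0)"
  proof (intro sum.cong refl)
    fix y assume y: "y \<in> D"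
    show "b y * (5 - common x y) = (if y \<noteq> x \<and> \<not> E x y \<and> common x y = 4 then 1 else 0)"
      using q_cases[OF x y] not_adj_self[of x] unfolding b_def q_def adj_def by auto
  qed
  also have "\<dots> = real (card {y\<in>D. y \<noteq> x \<and> \<not> E x y \<and> common x y = 4})"
    by (rule sum_indicator_card[OF finite_D])
  finally have "real (card {y\<in>D. y \<noteq> x \<and> \<not> E x y \<and> common x y = 4})
      = 5 * card D - 5 * (\<Sum>y\<in>D. adj x y) - 5 - (\<Sum>y\<in>D. common x y)
        + (\<Sum>y\<in>D. adj x y * common x y) + common x x"
    unfolding b_def using sum_delta_mult[OF finite_D x, of "\<lambda>_. 5"]
      sum_delta_mult[OF finite_D x, of "common x"]
    by (simp add: algebra_simps sum_subtractf sum.distrib sum_distrib_left)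
  then show ?thesis
    using sum_D_adj[OF x] sum_D_adj_common[OF x] sum_D_common[OF x] common_self[OF x] card_D
    by simp
qed

definition q4_class :: "'a \<Rightarrow> 'a set" where
  "q4_class x = {y\<in>D. y = x \<or> q x y = 4}"

lemma q4_class_subset: "q4_class x \<subseteq> D"
  unfolding q4_class_def by auto

lemma card_q4_class:
  assumes x: "x \<in> D"
  shows "card (q4_class x) = 20"
proof -
  have "q4_class x = insert x ({y\<in>D. E x y \<and> common x y = 2}
      \<union> {y\<in>D. y \<noteq> x \<and> \<not> E x y \<and> common x y = 4})"
    unfolding q4_class_def q_def adj_def using x not_adj_self by auto
  moreover have "card ({y\<in>D. E x y \<and> common x y = 2}
      \<union> {y\<in>D. y \<noteq> x \<and> \<not> E x y \<and> common x y = 4}) = 19"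
    using card_adj_common_2[OF x] card_nonadj_common_4[OF x] finite_D
    by (subst card_Un_disjoint) auto
  ultimately show ?thesis using finite_D not_adj_self[of x] by simp
qed

lemma q4_class_q:
  assumes x: "x \<in> D" and "y \<in> q4_class x" "z \<in> q4_class x" "y \<noteq> z"
  shows "q y z = 4"
proof -
  have "y \<in> D" "z \<in> D" "y = x \<or> q x y = 4" "z = x \<or> q x z = 4"
    using assms(2,3) unfolding q4_class_def by auto
  then show ?thesis
    using q_eq_4_trans[OF x \<open>y \<in> D\<close> \<open>z \<in> D\<close>] q_commute[of x] \<open>y \<noteq> z\<close> by metis
qed

end

section \<open>A q-class and its 4-cycles\<close>

locale srg_coclique_class = srg_coclique +
  fixes x0 :: 'a
  assumes x0_D: "x0 \<in> D"
begin

definition K :: "'a set" where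
  "K = q4_class x0"

lemma K_subset_D: "K \<subseteq> D"
  unfolding K_def by (rule q4_class_subset)

lemma finite_K: "finite K"
  using K_subset_D finite_D finite_subset by blast

lemma card_K: "card K = 20"
  unfolding K_def by (rule card_q4_class[OF x0_D])

lemma q_K: "x \<in> K \<Longrightarrow> y \<in> K \<Longrightarrow> x \<noteq> y \<Longrightarrow> q x y = 4"
  unfolding K_def by (rule q4_class_q[OF x0_D])

lemma K_eq_q4_class:
  assumes x: "x \<in> K"
  shows "K = q4_class x"
proof
  show "K \<subseteq> q4_class x"
    using q_K[OF x] K_subset_D unfolding q4_class_def by auto
next
  have xD: "x \<in> D" using x K_subset_D by auto
  have x0K: "x0 \<in> K" unfolding K_def q4_class_def using x0_D by simp
  show "q4_class x \<subseteq> K"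
  proof
    fix y assume "y \<in> q4_class x"
    then have yD: "y \<in> D" and "y = x \<or> q x y = 4" unfolding q4_class_def by auto
    then consider "y = x" | "y = x0" | "x = x0" "q x0 y = 4" | "x \<noteq> x0" "y \<noteq> x0" "y \<noteq> x" "q x y = 4"
      by blast
    then show "y \<in> K"
    proof cases
      case 4
      have "q x y = q x0 y"
        using q_eq_4_trans[OF xD x0_D yD] q_K[OF x x0K] 4 by auto
      then show ?thesis unfolding K_def q4_class_def using yD 4 by simp
    qed (use x x0K yD in \<open>auto simp: K_def q4_class_def\<close>)
  qed
qed

definition K_nbrs :: "'a \<Rightarrow> 'a set" where
  "K_nbrs x = {y\<in>K. E x y}"

lemma K_nbrs_subset: "K_nbrs x \<subseteq> K"
  unfolding K_nbrs_def by auto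

lemma K_nbrs_sym: "y \<in> K_nbrs x \<Longrightarrow> x \<in> K \<Longrightarrow> x \<in> K_nbrs y"
  unfolding K_nbrs_def using adj_sym by auto

lemma K_nbrs_irrefl: "x \<notin> K_nbrs x"
  unfolding K_nbrs_def using not_adj_self by auto

lemma card_K_nbrs:
  assumes x: "x \<in> K"
  shows "card (K_nbrs x) = 2"
proof -
  have "K_nbrs x = {y\<in>D. E x y \<and> common x y = 2}"
    unfolding K_nbrs_def K_eq_q4_class[OF x] q4_class_def q_def adj_def
    using not_adj_self by auto
  then show ?thesis using card_adj_common_2 x K_subset_D by auto
qed

lemma K_nbrs_two:
  assumes "x \<in> K"
  obtains y1 y2 where "K_nbrs x = {y1, y2}" "y1 \<noteq> y2"
  using card_K_nbrs[OF assms] by (auto simp: card_2_iff)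

lemma common_K:
  "x \<in> K \<Longrightarrow> y \<in> K \<Longrightarrow> x \<noteq> y \<Longrightarrow> common x y = (if E x y then 2 else 4)"
  using q_K[of x y] unfolding q_def adj_def by auto

definition sign_vec :: "'a \<Rightarrow> 'a \<Rightarrow> real" where
  "sign_vec x c = 2 * adj x c - 1"

definition sign_inner :: "'a \<Rightarrow> 'a \<Rightarrow> real" where
  "sign_inner x y = (\<Sum>c\<in>C. sign_vec x c * sign_vec y c)"

lemma sign_vec_cases: "sign_vec x c = 1 \<or> sign_vec x c = -1"
  unfolding sign_vec_def adj_def by auto

lemma sum_sign_vec: "x \<in> D \<Longrightarrow> (\<Sum>c\<in>C. sign_vec x c) = 0"
  using C_degree_eq[of x] card_C unfolding sign_vec_def C_degree_def
  by (simp add: sum_subtractf sum_distrib_left[symmetric])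

lemma sign_inner_D:
  assumes "x \<in> D" "y \<in> D"
  shows "sign_inner x y = 4 * common x y - 16"
proof -
  have "sign_inner x y = (\<Sum>c\<in>C. 4 * (adj x c * adj y c) - 2 * adj x c - 2 * adj y c + 1)"
    unfolding sign_inner_def sign_vec_def by (intro sum.cong) (auto simp: algebra_simps)
  also have "\<dots> = 4 * common x y - 2 * C_degree x - 2 * C_degree y + 16"
    unfolding common_def C_degree_def using card_C
    by (simp add: sum.distrib sum_subtractf sum_distrib_left)
  finally show ?thesis using C_degree_eq assms by simp
qed

lemma sign_inner_K:
  assumes "x \<in> K" "y \<in> K"
  shows "sign_inner x y = (if x = y then 16 else if E x y then -8 else 0)"
proof -
  have "x \<in> D" "y \<in> D" using assms K_subset_D by auto
  then show ?thesis using sign_inner_D common_K[OF assms] common_self by auto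
qed

lemma sign_inner_row_K:
  assumes x: "x \<in> K" and "Y \<subseteq> K" "finite Y" "x \<in> Y"
  shows "(\<Sum>y\<in>Y. b y * sign_inner x y) = 16 * b x - 8 * (\<Sum>y\<in>Y. adj x y * b y)"
proof -
  have "(\<Sum>y\<in>Y. b y * sign_inner x y)
      = (\<Sum>y\<in>Y. 16 * ((if y = x then 1 else 0) * b y) - 8 * (adj x y * b y))"
    using assms(2) not_adj_self[of x] by (intro sum.cong refl) (auto simp: sign_inner_K x adj_def)
  also have "\<dots> = 16 * b x - 8 * (\<Sum>y\<in>Y. adj x y * b y)"
    using sum_delta_mult[OF assms(3,4)]
    by (simp add: sum_subtractf sum_distrib_left[symmetric])
  finally show ?thesis .
qed

definition K_closed :: "'a set \<Rightarrow> bool" where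
  "K_closed Z \<longleftrightarrow> Z \<subseteq> K \<and> (\<forall>x\<in>Z. \<forall>y\<in>K. E x y \<longrightarrow> y \<in> Z)"

lemma K_closed_finite: "K_closed Z \<Longrightarrow> finite Z"
  unfolding K_closed_def using finite_K finite_subset by blast

lemma K_closed_K_nbrs: "K_closed Z \<Longrightarrow> x \<in> Z \<Longrightarrow> K_nbrs x \<subseteq> Z"
  unfolding K_closed_def K_nbrs_def by auto

lemma K_closed_sum_sign_vec:
  assumes Z: "K_closed Z" and c: "c \<in> C"
  shows "(\<Sum>x\<in>Z. sign_vec x c) = 0"
proof -
  have ZK: "Z \<subseteq> K" using Z unfolding K_closed_def by simp
  have finZ: "finite Z" using K_closed_finite[OF Z] .
  have row: "(\<Sum>y\<in>Z. sign_inner x y) = 0" if x: "x \<in> Z" for x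
  proof -
    have xK: "x \<in> K" using x ZK by auto
    have "{y\<in>Z. E x y} = K_nbrs x"
      using K_closed_K_nbrs[OF Z x] ZK unfolding K_nbrs_def by auto
    then have "(\<Sum>y\<in>Z. adj x y) = 2"
      using sum_adj_card[OF finZ] card_K_nbrs[OF xK] by simp
    then show ?thesis using sign_inner_row_K[OF xK ZK finZ x, of "\<lambda>_. 1"] by simp
  qed
  have "(\<Sum>c\<in>C. (\<Sum>x\<in>Z. sign_vec x c)\<^sup>2) = (\<Sum>x\<in>Z. \<Sum>y\<in>Z. sign_inner x y)"
    unfolding sign_inner_def power2_eq_square sum_product
    by (subst sum.swap) (simp add: sum.swap[of _ C])
  also have "\<dots> = 0" using row by simp
  finally show ?thesis
    using sum_nonneg_eq_0_iff[OF finite_C, of "\<lambda>c. (\<Sum>x\<in>Z. sign_vec x c)\<^sup>2"] c by simp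
qed

text \<open>Since the sign vectors of a closed set sum to zero, each vertex of C is adjacent to exactly
  half of it.\<close>
lemma K_closed_even:
  assumes Z: "K_closed Z"
  shows "even (card Z)"
proof -
  obtain c where c: "c \<in> C" using C_nonempty by auto
  have "0 = (\<Sum>x\<in>Z. sign_vec x c)" using K_closed_sum_sign_vec[OF Z c] by simp
  also have "\<dots> = 2 * (\<Sum>x\<in>Z. adj c x) - real (card Z)"
    unfolding sign_vec_def by (simp add: adj_commute[of _ c] sum_subtractf sum_distrib_left)
  also have "(\<Sum>x\<in>Z. adj c x) = real (card {x\<in>Z. E c x})"
    by (rule sum_adj_card[OF K_closed_finite[OF Z]])
  finally have "card Z = 2 * card {x\<in>Z. E c x}" by linarith
  then show ?thesis by simp
qed

lemma K_closed_card_ge_4: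
  assumes Z: "K_closed Z" and x: "x \<in> Z"
  shows "4 \<le> card Z"
proof -
  have "x \<in> K" using Z x unfolding K_closed_def by auto
  then obtain y1 y2 where "K_nbrs x = {y1, y2}" "y1 \<noteq> y2" by (rule K_nbrs_two)
  then have "{x, y1, y2} \<subseteq> Z" "card {x, y1, y2} = 3"
    using K_closed_K_nbrs[OF Z x] x K_nbrs_irrefl[of x] by auto
  then have "3 \<le> card Z" using K_closed_finite[OF Z] by (metis card_mono)
  moreover have "card Z \<noteq> 3" using K_closed_even[OF Z] by auto
  ultimately show ?thesis by simp
qed

definition component :: "'a \<Rightarrow> 'a set" where
  "component x = \<Inter>{Z. K_closed Z \<and> x \<in> Z}"

lemma K_closed_K: "K_closed K"
  unfolding K_closed_def by auto

lemma component_closed: "x \<in> K \<Longrightarrow> K_closed (component x)"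
  using K_closed_K unfolding component_def K_closed_def by blast

lemma component_self: "x \<in> K \<Longrightarrow> x \<in> component x"
  unfolding component_def by auto

lemma component_least: "K_closed Z \<Longrightarrow> x \<in> Z \<Longrightarrow> component x \<subseteq> Z"
  unfolding component_def by auto

lemma component_subset_K: "x \<in> K \<Longrightarrow> component x \<subseteq> K"
  using component_least[OF K_closed_K] .

lemma K_closed_Diff: "K_closed Z1 \<Longrightarrow> K_closed Z2 \<Longrightarrow> K_closed (Z1 - Z2)"
  unfolding K_closed_def using adj_sym by blast

lemma component_eq:
  assumes x: "x \<in> K" and w: "w \<in> component x"
  shows "component w = component x"
proof -
  have wK: "w \<in> K" using w component_subset_K[OF x] by auto
  have "x \<in> component w"
  proof (rule ccontr)
    assume "x \<notin> component w"
    then have "component x \<subseteq> component x - component w"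
      using component_least K_closed_Diff[OF component_closed[OF x] component_closed[OF wK]] component_self[OF x]
      by blast
    then show False using w component_self[OF wK] by auto
  qed
  then show ?thesis
    using component_least[OF component_closed[OF wK]] component_least[OF component_closed[OF x] w] by blast
qed

lemma sign_vec_relation:
  assumes "X \<subseteq> K" "16 \<le> card X"
  obtains b b0 where "b0 \<noteq> 0 \<or> (\<exists>x\<in>X. b x \<noteq> 0)"
    and "\<And>c. c \<in> C \<Longrightarrow> (\<Sum>x\<in>X. b x * sign_vec x c) + b0 = 0"
proof -
  have finX: "finite X" using assms(1) finite_K finite_subset by blast
  define I where "I = insert None (Some ` X)"
  define f where "f i c = (case i of None \<Rightarrow> 1 | Some x \<Rightarrow> sign_vec x c)" for i c
  have finI: "finite I" unfolding I_def using finX by simp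
  have "card I = card X + 1" unfolding I_def using finX by (simp add: card_image)
  then have "card C < card I" using assms(2) card_C by simp
  then obtain \<beta> where nontriv: "\<exists>i\<in>I. \<beta> i \<noteq> 0" and rel: "\<forall>c\<in>C. (\<Sum>i\<in>I. \<beta> i * f i c) = 0"
    using exists_nontrivial_linear_relation[OF finite_C finI] by blast
  show ?thesis
  proof
    show "\<beta> None \<noteq> 0 \<or> (\<exists>x\<in>X. \<beta> (Some x) \<noteq> 0)" using nontriv unfolding I_def by auto
  next
    fix c assume "c \<in> C"
    have "(\<Sum>i\<in>I. \<beta> i * f i c) = \<beta> None + (\<Sum>x\<in>X. \<beta> (Some x) * sign_vec x c)"
      unfolding I_def f_def using finX by (simp add: sum.reindex)
    then show "(\<Sum>x\<in>X. \<beta> (Some x) * sign_vec x c) + \<beta> None = 0" using rel \<open>c \<in> C\<close> by simp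
  qed
qed

lemma sum_squared_sign_vec_comb:
  assumes X: "X \<subseteq> K"
  shows "(\<Sum>c\<in>C. ((\<Sum>x\<in>X. b x * sign_vec x c) + b0)\<^sup>2)
    = 16 * (\<Sum>x\<in>X. (b x)\<^sup>2) - 8 * (\<Sum>x\<in>X. \<Sum>y\<in>X. adj x y * b x * b y) + 16 * b0\<^sup>2"
proof -
  have finX: "finite X" using X finite_K finite_subset by blast
  have "(\<Sum>c\<in>C. ((\<Sum>x\<in>X. b x * sign_vec x c) + b0)\<^sup>2)
      = (\<Sum>c\<in>C. (\<Sum>x\<in>X. \<Sum>y\<in>X. b x * b y * (sign_vec x c * sign_vec y c))
        + 2 * b0 * (\<Sum>x\<in>X. b x * sign_vec x c) + b0 * b0)"
    by (intro sum.cong refl)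
      (simp add: power2_eq_square algebra_simps sum_product sum_distrib_left)
  also have "\<dots> = (\<Sum>x\<in>X. b x * (\<Sum>y\<in>X. b y * sign_inner x y))
      + 2 * b0 * (\<Sum>x\<in>X. b x * (\<Sum>c\<in>C. sign_vec x c)) + 16 * b0\<^sup>2"
  proof -
    have "(\<Sum>c\<in>C. \<Sum>x\<in>X. \<Sum>y\<in>X. b x * b y * (sign_vec x c * sign_vec y c))
        = (\<Sum>x\<in>X. b x * (\<Sum>y\<in>X. b y * sign_inner x y))"
      unfolding sign_inner_def
      by (subst sum.swap, rule sum.cong[OF refl], subst sum.swap)
        (simp add: sum_distrib_left mult.assoc)
    moreover have "(\<Sum>c\<in>C. \<Sum>x\<in>X. b x * sign_vec x c)
        = (\<Sum>x\<in>X. b x * (\<Sum>c\<in>C. sign_vec x c))"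
      by (subst sum.swap) (simp add: sum_distrib_left)
    ultimately show ?thesis
      using card_C by (simp add: sum.distrib power2_eq_square sum_distrib_left[symmetric])
  qed
  also have "(\<Sum>x\<in>X. b x * (\<Sum>c\<in>C. sign_vec x c)) = 0"
    using X K_subset_D by (simp add: subset_iff sum_sign_vec)
  also have "(\<Sum>x\<in>X. b x * (\<Sum>y\<in>X. b y * sign_inner x y))
      = (\<Sum>x\<in>X. 16 * (b x)\<^sup>2 - 8 * (\<Sum>y\<in>X. adj x y * b x * b y))"
    using X finX
    by (intro sum.cong refl) (simp add: sign_inner_row_K subset_iff power2_eq_square
        right_diff_distrib sum_distrib_left mult.assoc mult.left_commute)
  finally show ?thesis by (simp add: sum_subtractf sum_distrib_left)
qed

lemma sign_vec_relation_identity: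
  assumes X: "X \<subseteq> K"
    and rel: "\<And>c. c \<in> C \<Longrightarrow> (\<Sum>x\<in>X. b x * sign_vec x c) + b0 = 0"
  shows "8 * (\<Sum>x\<in>X. (2 - (\<Sum>y\<in>X. adj x y)) * (b x)\<^sup>2)
    + 4 * (\<Sum>x\<in>X. \<Sum>y\<in>X. adj x y * (b x - b y)\<^sup>2) + 16 * b0\<^sup>2 = 0"
proof -
  have "16 * (\<Sum>x\<in>X. (b x)\<^sup>2) - 8 * (\<Sum>x\<in>X. \<Sum>y\<in>X. adj x y * b x * b y) + 16 * b0\<^sup>2 = 0"
    using sum_squared_sign_vec_comb[OF X, of b b0] rel by simp
  moreover have "2 * (\<Sum>x\<in>X. \<Sum>y\<in>X. adj x y * b x * b y)
      = 2 * (\<Sum>x\<in>X. (\<Sum>y\<in>X. adj x y) * (b x)\<^sup>2)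
        - (\<Sum>x\<in>X. \<Sum>y\<in>X. adj x y * (b x - b y)\<^sup>2)"
    by (rule sum_symmetric_quadratic_form[OF adj_commute])
  moreover have "(\<Sum>x\<in>X. (2 - (\<Sum>y\<in>X. adj x y)) * (b x)\<^sup>2)
      = 2 * (\<Sum>x\<in>X. (b x)\<^sup>2) - (\<Sum>x\<in>X. (\<Sum>y\<in>X. adj x y) * (b x)\<^sup>2)"
    by (simp only: left_diff_distrib sum_subtractf sum_distrib_left)
  ultimately show ?thesis by linarith
qed

lemma sum_adj_le_2: "X \<subseteq> K \<Longrightarrow> x \<in> X \<Longrightarrow> (\<Sum>y\<in>X. adj x y) \<le> 2"
proof -
  assume X: "X \<subseteq> K" and "x \<in> X"
  have "card {y\<in>X. E x y} \<le> card (K_nbrs x)"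
    using X finite_K by (intro card_mono) (auto simp: K_nbrs_def intro: finite_subset)
  then show ?thesis
    using sum_adj_card[OF finite_subset[OF X finite_K]] card_K_nbrs[of x] \<open>x \<in> X\<close> X by auto
qed

lemma K_closed_support:
  assumes X: "X \<subseteq> K"
    and deg: "(\<Sum>x\<in>X. (2 - (\<Sum>y\<in>X. adj x y)) * (b x)\<^sup>2) = 0"
    and const: "(\<Sum>x\<in>X. \<Sum>y\<in>X. adj x y * (b x - b y)\<^sup>2) = 0"
  shows "K_closed {x\<in>X. b x \<noteq> 0}"
  unfolding K_closed_def
proof (intro conjI ballI impI)
  show "{x\<in>X. b x \<noteq> 0} \<subseteq> K" using X by auto
next
  fix x y assume x: "x \<in> {x\<in>X. b x \<noteq> 0}" and "y \<in> K" "E x y"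
  have finX: "finite X" using X finite_K finite_subset by blast
  have xX: "x \<in> X" and bx: "b x \<noteq> 0" using x by auto
  have xK: "x \<in> K" using xX X by auto
  have "(2 - (\<Sum>y\<in>X. adj x y)) * (b x)\<^sup>2 = 0"
    using sum_nonneg_eq_0_iff[OF finX, of "\<lambda>x. (2 - (\<Sum>y\<in>X. adj x y)) * (b x)\<^sup>2"]
      deg sum_adj_le_2[OF X] xX by simp
  then have "card {y\<in>X. E x y} = card (K_nbrs x)"
    using bx sum_adj_card[OF finX, of x] card_K_nbrs[OF xK] by simp
  moreover have "{y\<in>X. E x y} \<subseteq> K_nbrs x" unfolding K_nbrs_def using X by auto
  ultimately have "{y\<in>X. E x y} = K_nbrs x"
    using card_subset_eq[OF finite_subset[OF K_nbrs_subset finite_K]] by blast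
  then have "y \<in> X" using \<open>y \<in> K\<close> \<open>E x y\<close> unfolding K_nbrs_def by auto
  have "(\<Sum>y\<in>X. adj x y * (b x - b y)\<^sup>2) = 0"
    using sum_nonneg_eq_0_iff[OF finX, of "\<lambda>x. \<Sum>y\<in>X. adj x y * (b x - b y)\<^sup>2"] const xX
    by (simp add: sum_nonneg adj_nonneg)
  then have "adj x y * (b x - b y)\<^sup>2 = 0"
    using sum_nonneg_eq_0_iff[OF finX, of "\<lambda>y. adj x y * (b x - b y)\<^sup>2"] \<open>y \<in> X\<close>
    by (simp add: adj_nonneg del: mult_eq_0_iff)
  then show "y \<in> {x\<in>X. b x \<noteq> 0}" using bx \<open>y \<in> X\<close> \<open>E x y\<close> by (simp add: adj_def)
qed

text \<open>The sign vectors of K lie in a 16-dimensional space containing the all-ones vector, and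
  their Gram matrix is 8 times 2I minus the adjacency matrix of K, which is positive definite on
  any set without a closed subset.\<close>
lemma card_le_15_if_no_closed_subset:
  assumes X: "X \<subseteq> K" and no_closed: "\<And>Z. K_closed Z \<Longrightarrow> Z \<subseteq> X \<Longrightarrow> Z = {}"
  shows "card X \<le> 15"
proof (rule ccontr)
  assume "\<not> card X \<le> 15"
  then have "16 \<le> card X" by simp
  then obtain b0 b where nontriv: "b0 \<noteq> 0 \<or> (\<exists>x\<in>X. b x \<noteq> 0)"
    and rel: "\<And>c. c \<in> C \<Longrightarrow> (\<Sum>x\<in>X. b x * sign_vec x c) + b0 = 0"
    by (rule sign_vec_relation[OF X]) auto
  let ?deg = "\<Sum>x\<in>X. (2 - (\<Sum>y\<in>X. adj x y)) * (b x)\<^sup>2"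
  let ?diff = "\<Sum>x\<in>X. \<Sum>y\<in>X. adj x y * (b x - b y)\<^sup>2"
  have "0 \<le> ?deg" using sum_adj_le_2[OF X] by (intro sum_nonneg) simp
  moreover have "0 \<le> ?diff" by (intro sum_nonneg mult_nonneg_nonneg adj_nonneg) simp_all
  moreover have "0 \<le> b0\<^sup>2" by simp
  ultimately have "b0\<^sup>2 = 0" "?deg = 0" "?diff = 0"
    using sign_vec_relation_identity[OF X rel] by linarith+
  then have "K_closed {x\<in>X. b x \<noteq> 0}" using K_closed_support[OF X] by blast
  then have "\<forall>x\<in>X. b x = 0" using no_closed by auto
  then show False using nontriv \<open>b0\<^sup>2 = 0\<close> by simp
qed

lemma components_disjoint: "pairwise disjnt (component ` K)"
  unfolding pairwise_def disjnt_def using component_eq by blast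

text \<open>Removing one vertex from each component leaves a set without nonempty closed subsets.\<close>
lemma card_components_ge_5: "5 \<le> card (component ` K)"
proof -
  define rep where "rep Z = (SOME w. w \<in> Z)" for Z :: "'a set"
  have rep: "rep (component x) \<in> component x" if "x \<in> K" for x
    unfolding rep_def using component_self[OF that] by (rule someI)
  define H where "H = rep ` component ` K"
  have H: "H \<subseteq> K" unfolding H_def using rep component_subset_K by blast
  have "card (K - H) \<le> 15"
  proof (rule card_le_15_if_no_closed_subset)
    fix Z assume Z: "K_closed Z" "Z \<subseteq> K - H"
    show "Z = {}"
    proof (rule ccontr)
      assume "Z \<noteq> {}"
      then obtain w where "w \<in> Z" by auto
      then have "w \<in> K" "rep (component w) \<in> Z" using Z component_least rep by blast+
      moreover have "rep (component w) \<in> H" unfolding H_def using \<open>w \<in> K\<close> by simp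
      ultimately show False using Z by auto
    qed
  qed simp
  moreover have "card (K - H) = 20 - card H"
    using H finite_K card_K by (simp add: card_Diff_subset finite_subset)
  moreover have "card H \<le> card (component ` K)"
    unfolding H_def using finite_K by (simp add: card_image_le)
  ultimately show ?thesis by linarith
qed

lemma card_component:
  assumes x: "x \<in> K"
  shows "card (component x) = 4"
proof -
  let ?P = "component ` K"
  have finP: "finite ?P" using finite_K by simp
  have large: "4 \<le> card Z" if "Z \<in> ?P" for Z
    using that K_closed_card_ge_4 component_closed component_self by blast
  have "\<Union>?P = K" using component_subset_K component_self by blast
  then have "20 = sum card ?P"
    using card_K card_Union_disjoint[OF components_disjoint] component_closed K_closed_finite
    by auto
  also have "\<dots> = card (component x) + sum card (?P - {component x})"
    using finP x by (simp add: sum.remove)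
  finally have sum: "20 = card (component x) + sum card (?P - {component x})" .
  have "4 * card (?P - {component x}) \<le> sum card (?P - {component x})"
    using sum_mono[of "?P - {component x}" "\<lambda>_. 4" card] large by simp
  moreover have "card (?P - {component x}) = card ?P - 1" using finP x by simp
  ultimately have "card (component x) \<le> 4" using sum card_components_ge_5 by linarith
  then show ?thesis using K_closed_card_ge_4[OF component_closed component_self] x by force
qed

lemma K_closed_card_dvd_4:
  assumes Z: "K_closed Z"
  shows "4 dvd card Z"
proof -
  have ZK: "Z \<subseteq> K" using Z unfolding K_closed_def by simp
  have "\<Union>(component ` Z) \<subseteq> Z" using component_least[OF Z] by blast
  moreover have "Z \<subseteq> \<Union>(component ` Z)" using component_self ZK by blast
  ultimately have "\<Union>(component ` Z) = Z" by (rule antisym)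
  moreover have "pairwise disjnt (component ` Z)"
    using pairwise_subset[OF components_disjoint image_mono[OF ZK]] .
  moreover have "finite A" if "A \<in> component ` Z" for A
    using that component_closed K_closed_finite ZK by blast
  ultimately have "card Z = sum card (component ` Z)"
    using card_Union_disjoint by metis
  also have "\<dots> = (\<Sum>A\<in>component ` Z. 4)"
    using ZK card_component by (intro sum.cong refl) auto
  finally show ?thesis by simp
qed

lemma K_nbrs_pair:
  assumes x: "x \<in> K" and y: "y \<in> K_nbrs x"
  obtains z where "K_nbrs x = {y, z}" "z \<noteq> y"
proof -
  obtain u v where uv: "K_nbrs x = {u, v}" "u \<noteq> v" using K_nbrs_two[OF x] .
  then have "y = u \<or> y = v" using y by auto
  then show ?thesis using that uv by (metis insert_commute)
qed

lemma K_nbrs_not_adj: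
  assumes x: "x \<in> K" and y: "K_nbrs x = {y1, y2}" "y1 \<noteq> y2"
  shows "\<not> E y1 y2"
proof
  assume E12: "E y1 y2"
  have y1: "y1 \<in> K" "x \<in> K_nbrs y1" and y2: "y2 \<in> K" "x \<in> K_nbrs y2"
    using y K_nbrs_sym[OF _ x] K_nbrs_subset by auto
  have "y2 \<in> K_nbrs y1" "y1 \<in> K_nbrs y2"
    using y1 y2 E12 adj_sym unfolding K_nbrs_def by auto
  moreover have "x \<noteq> y1" "x \<noteq> y2" using y K_nbrs_irrefl[of x] by auto
  ultimately have "K_nbrs y1 = {x, y2}" "K_nbrs y2 = {x, y1}"
    using card_2_eq_pair[OF card_K_nbrs] y1 y2 by metis+
  then have "K_closed {x, y1, y2}"
    using x y1 y2 y unfolding K_closed_def K_nbrs_def by auto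
  moreover have "card {x, y1, y2} = 3"
    using y K_nbrs_irrefl[of x] by auto
  ultimately show False using K_closed_even by fastforce
qed

lemma K_square:
  assumes x: "x \<in> K" and y: "K_nbrs x = {y1, y2}" "y1 \<noteq> y2"
  shows "\<exists>w\<in>K. w \<noteq> x \<and> E w y1 \<and> E w y2"
proof -
  have y1: "y1 \<in> K" "x \<in> K_nbrs y1" and y2: "y2 \<in> K" "x \<in> K_nbrs y2"
    using y K_nbrs_sym[OF _ x] K_nbrs_subset by auto
  obtain z1 where z1: "K_nbrs y1 = {x, z1}" "z1 \<noteq> x" using K_nbrs_pair[OF y1] by blast
  obtain z2 where z2: "K_nbrs y2 = {x, z2}" "z2 \<noteq> x" using K_nbrs_pair[OF y2] by blast
  have E: "E y1 z1" "E y2 z2" "z1 \<in> K" "z2 \<in> K" using z1 z2 unfolding K_nbrs_def by auto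
  have closed: "K_closed (component x)" by (rule component_closed[OF x])
  have "y1 \<in> component x" "y2 \<in> component x"
    using K_closed_K_nbrs[OF closed component_self[OF x]] y by auto
  then have sub: "{x, y1, y2, z1, z2} \<subseteq> component x"
    using K_closed_K_nbrs[OF closed] component_self[OF x] z1 z2 by blast
  have "x \<noteq> y1" "x \<noteq> y2" using y K_nbrs_irrefl[of x] by auto
  moreover have "z1 \<noteq> y2" "z2 \<noteq> y1" "z1 \<noteq> y1" "z2 \<noteq> y2"
    using K_nbrs_not_adj[OF x y] E not_adj_self adj_sym by auto
  ultimately have "z1 \<noteq> z2 \<Longrightarrow> card {x, y1, y2, z1, z2} = 5"
    using y(2) z1(2) z2(2) by simp
  then have "z1 = z2"
    using card_component[OF x] card_mono[OF K_closed_finite[OF closed] sub] by linarith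
  then show ?thesis using E z1(2) adj_sym by auto
qed

lemma antipode_exists:
  assumes x: "x \<in> K"
  shows "\<exists>w. w \<in> K \<and> w \<noteq> x \<and> K_nbrs w = K_nbrs x"
proof -
  obtain y1 y2 where y: "K_nbrs x = {y1, y2}" "y1 \<noteq> y2" using K_nbrs_two[OF x] by blast
  obtain w where w: "w \<in> K" "w \<noteq> x" "E w y1" "E w y2" using K_square[OF x y] by blast
  have "y1 \<in> K_nbrs w" "y2 \<in> K_nbrs w" using y w K_nbrs_subset unfolding K_nbrs_def by auto
  then have "K_nbrs w = {y1, y2}" using card_2_eq_pair[OF card_K_nbrs[OF w(1)]] y(2) by blast
  then show ?thesis using w y by auto
qed

definition antipode :: "'a \<Rightarrow> 'a" where
  "antipode x = (SOME w. w \<in> K \<and> w \<noteq> x \<and> K_nbrs w = K_nbrs x)"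

lemma antipode_in_K: "x \<in> K \<Longrightarrow> antipode x \<in> K"
  and antipode_neq: "x \<in> K \<Longrightarrow> antipode x \<noteq> x"
  and K_nbrs_antipode: "x \<in> K \<Longrightarrow> K_nbrs (antipode x) = K_nbrs x"
  using someI_ex[OF antipode_exists] unfolding antipode_def by auto

lemma antipode_unique:
  assumes x: "x \<in> K" and w: "w \<in> K" "w \<noteq> x" "K_nbrs w = K_nbrs x"
  shows "w = antipode x"
proof -
  obtain y1 y2 where "K_nbrs x = {y1, y2}" "y1 \<noteq> y2" using K_nbrs_two[OF x] by blast
  then have y1: "y1 \<in> K_nbrs x" "y1 \<in> K" using K_nbrs_subset by auto
  have "x \<in> K_nbrs y1" "w \<in> K_nbrs y1" "antipode x \<in> K_nbrs y1"
    using K_nbrs_sym y1 x w antipode_in_K[OF x] K_nbrs_antipode[OF x] by auto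
  then have "K_nbrs y1 = {x, w}" "K_nbrs y1 = {x, antipode x}"
    using card_2_eq_pair[OF card_K_nbrs[OF y1(2)]] w(2) antipode_neq[OF x] by metis+
  then show ?thesis using w(2) antipode_neq[OF x] by (metis doubleton_eq_iff)
qed

lemma antipode_antipode: "x \<in> K \<Longrightarrow> antipode (antipode x) = x"
  using antipode_unique[of "antipode x" x] antipode_in_K antipode_neq K_nbrs_antipode by metis

lemma antipode_not_adj: "x \<in> K \<Longrightarrow> \<not> E x (antipode x)"
  using K_nbrs_antipode[of x] K_nbrs_irrefl[of "antipode x"] antipode_in_K[of x]
  unfolding K_nbrs_def by auto

lemma K_nbrs_of_nbr:
  assumes x: "x \<in> K" and y: "y \<in> K_nbrs x"
  shows "K_nbrs y = {x, antipode x}"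
proof -
  have "y \<in> K" using y K_nbrs_subset by auto
  moreover have "x \<in> K_nbrs y" "antipode x \<in> K_nbrs y"
    using K_nbrs_sym[OF y x] K_nbrs_sym[of y "antipode x"] y antipode_in_K[OF x]
      K_nbrs_antipode[OF x] by auto
  ultimately show ?thesis using card_2_eq_pair[OF card_K_nbrs] antipode_neq[OF x] by metis
qed

lemma K_nbrs_eq_antipodes:
  assumes x: "x \<in> K" and y: "y \<in> K_nbrs x"
  shows "K_nbrs x = {y, antipode y}" "antipode y \<noteq> y"
proof -
  have yK: "y \<in> K" using y K_nbrs_subset by auto
  obtain y' where y': "K_nbrs x = {y, y'}" "y' \<noteq> y" using K_nbrs_pair[OF x y] by blast
  then have "y' \<in> K" using K_nbrs_subset by auto
  moreover have "K_nbrs y' = K_nbrs y" using K_nbrs_of_nbr[OF x] y' by auto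
  ultimately have "y' = antipode y" using antipode_unique[OF yK] y'(2) by simp
  then show "K_nbrs x = {y, antipode y}" "antipode y \<noteq> y" using y' by auto
qed

lemma sign_vec_square_sum:
  assumes x: "x \<in> K" and y: "y \<in> K_nbrs x" and c: "c \<in> C"
  shows "sign_vec x c + sign_vec (antipode x) c + sign_vec y c + sign_vec (antipode y) c = 0"
proof -
  have yK: "y \<in> K" using y K_nbrs_subset by auto
  define S where "S = {x, antipode x, y, antipode y}"
  have nbrs: "K_nbrs u = {y, antipode y} \<or> K_nbrs u = {x, antipode x}" if "u \<in> S" for u
    using that K_nbrs_eq_antipodes[OF x y] K_nbrs_of_nbr[OF x y] K_nbrs_antipode[OF x]
      K_nbrs_antipode[OF yK] unfolding S_def by auto
  have "K_closed S"
    unfolding K_closed_def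
  proof (intro conjI ballI impI)
    show "S \<subseteq> K" unfolding S_def using x yK antipode_in_K by auto
  next
    fix u w assume "u \<in> S" "w \<in> K" "E u w"
    then have "w \<in> K_nbrs u" unfolding K_nbrs_def by simp
    then show "w \<in> S" using nbrs[OF \<open>u \<in> S\<close>] unfolding S_def by auto
  qed
  then have "(\<Sum>z\<in>S. sign_vec z c) = 0" using K_closed_sum_sign_vec c by blast
  moreover have "x \<noteq> y" "x \<noteq> antipode y" "antipode x \<noteq> y" "antipode x \<noteq> antipode y"
    using y K_nbrs_eq_antipodes[OF x y] K_nbrs_irrefl[of x] antipode_not_adj[OF x]
      K_nbrs_antipode[OF x] K_nbrs_irrefl[of "antipode x"] unfolding K_nbrs_def by auto
  ultimately show ?thesis
    unfolding S_def using antipode_neq[OF x] antipode_neq[OF yK] by (simp add: algebra_simps)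
qed

section \<open>Antipodal pairs and Bessel's inequality\<close>

definition sign_diff :: "'a \<Rightarrow> 'a \<Rightarrow> real" where
  "sign_diff x c = (sign_vec x c - sign_vec (antipode x) c) / 2"

definition sign_avg :: "'a \<Rightarrow> 'a \<Rightarrow> real" where
  "sign_avg x c = (sign_vec x c + sign_vec (antipode x) c) / 2"

definition dot_C :: "('a \<Rightarrow> real) \<Rightarrow> ('a \<Rightarrow> real) \<Rightarrow> real" where
  "dot_C f h = (\<Sum>c\<in>C. f c * h c)"

lemma adj_antipode:
  assumes "x \<in> K" "z \<in> K"
  shows "adj x (antipode z) = adj x z" and "adj (antipode x) z = adj x z"
proof -
  have "E x (antipode z) \<longleftrightarrow> E x z"
    using K_nbrs_antipode[OF assms(2)] assms(1) adj_sym unfolding K_nbrs_def by blast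
  moreover have "E (antipode x) z \<longleftrightarrow> E x z"
    using K_nbrs_antipode[OF assms(1)] assms(2) unfolding K_nbrs_def by blast
  ultimately show "adj x (antipode z) = adj x z" "adj (antipode x) z = adj x z"
    unfolding adj_def by simp_all
qed

lemma sign_inner_K_delta:
  "x \<in> K \<Longrightarrow> z \<in> K \<Longrightarrow> sign_inner x z = 16 * delta x z - 8 * adj x z"
  using sign_inner_K[of x z] not_adj_self[of x] unfolding delta_def adj_def by auto

lemma delta_antipode:
  assumes "x \<in> K" "z \<in> K"
  shows "delta x (antipode z) = delta (antipode x) z" and "delta (antipode x) (antipode z) = delta x z"
  using antipode_antipode assms unfolding delta_def by metis+

lemma dot_C_sign_diff:
  assumes x: "x \<in> K" and z: "z \<in> K"
  shows "dot_C (sign_diff x) (sign_diff z) = 8 * delta x z - 8 * delta (antipode x) z"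
    and "dot_C (sign_avg x) (sign_avg z) = 8 * delta x z + 8 * delta (antipode x) z - 8 * adj x z"
    and "dot_C (sign_diff x) (sign_avg z) = 0"
    and "dot_C (sign_avg x) (sign_diff z) = 0"
proof -
  let ?x' = "antipode x" and ?z' = "antipode z"
  have x': "?x' \<in> K" and z': "?z' \<in> K" using antipode_in_K x z by auto
  have expand: "dot_C (\<lambda>c. (sign_vec x c + s * sign_vec ?x' c) / 2)
        (\<lambda>c. (sign_vec z c + t * sign_vec ?z' c) / 2)
      = (sign_inner x z + t * sign_inner x ?z' + s * sign_inner ?x' z
        + s * t * sign_inner ?x' ?z') / 4" for s t
    unfolding dot_C_def sign_inner_def
    by (simp add: sum_divide_distrib[symmetric] sum.distrib sum_distrib_left algebra_simps)
  note entries = sign_inner_K_delta[OF x z] sign_inner_K_delta[OF x z'] sign_inner_K_delta[OF x' z]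
    sign_inner_K_delta[OF x' z'] adj_antipode[OF x z] adj_antipode[OF x z']
    delta_antipode[OF x z] antipode_antipode[OF z]
  show "dot_C (sign_diff x) (sign_diff z) = 8 * delta x z - 8 * delta ?x' z"
    using expand[of "-1" "-1"] entries unfolding sign_diff_def by (simp add: algebra_simps)
  show "dot_C (sign_avg x) (sign_avg z) = 8 * delta x z + 8 * delta ?x' z - 8 * adj x z"
    using expand[of 1 1] entries unfolding sign_avg_def by (simp add: algebra_simps)
  show "dot_C (sign_diff x) (sign_avg z) = 0"
    using expand[of "-1" 1] entries unfolding sign_diff_def sign_avg_def by (simp add: algebra_simps)
  show "dot_C (sign_avg x) (sign_diff z) = 0"
    using expand[of 1 "-1"] entries unfolding sign_diff_def sign_avg_def by (simp add: algebra_simps)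
qed

lemma sum_K_delta: "x \<in> K \<Longrightarrow> (\<Sum>z\<in>K. delta x z * F z) = F x"
  unfolding delta_def by (rule sum_delta_mult[OF finite_K])

lemma sum_K_adj: "(\<Sum>z\<in>K. adj x z * F z) = (\<Sum>z\<in>K_nbrs x. F z)"
proof -
  have "(\<Sum>z\<in>K. adj x z * F z) = (\<Sum>z\<in>K. if E x z then F z else 0)"
    unfolding adj_def by (intro sum.cong) auto
  then show ?thesis unfolding K_nbrs_def using finite_K by (simp add: sum.inter_filter)
qed

lemma sign_diff_antipode: "x \<in> K \<Longrightarrow> sign_diff (antipode x) c = - sign_diff x c"
  unfolding sign_diff_def by (simp add: antipode_antipode field_simps)

lemma sign_avg_antipode: "x \<in> K \<Longrightarrow> sign_avg (antipode x) c = sign_avg x c"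
  unfolding sign_avg_def by (simp add: antipode_antipode)

lemma sign_avg_nbr: "x \<in> K \<Longrightarrow> z \<in> K_nbrs x \<Longrightarrow> c \<in> C \<Longrightarrow> sign_avg z c = - sign_avg x c"
  unfolding sign_avg_def using sign_vec_square_sum[of x z c] by (simp add: field_simps)

lemma sum_sign_diff: "x \<in> K \<Longrightarrow> (\<Sum>c\<in>C. sign_diff x c) = 0"
  and sum_sign_avg: "x \<in> K \<Longrightarrow> (\<Sum>c\<in>C. sign_avg x c) = 0"
  using sum_sign_vec[of x] sum_sign_vec[of "antipode x"] antipode_in_K[of x] subsetD[OF K_subset_D]
  unfolding sign_diff_def sign_avg_def
  by (auto simp: sum_divide_distrib[symmetric] sum_subtractf sum.distrib)

lemma sign_diff_sq_add_sign_avg_sq: "(sign_diff x c)\<^sup>2 + (sign_avg x c)\<^sup>2 = 1"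
  using sign_vec_cases[of x c] sign_vec_cases[of "antipode x" c]
  unfolding sign_diff_def sign_avg_def by (auto simp: power2_eq_square)

definition frame :: "'a + 'a \<Rightarrow> 'a \<Rightarrow> real" where
  "frame i = (case i of Inl x \<Rightarrow> sign_diff x | Inr x \<Rightarrow> sign_avg x)"

definition frame_weight :: "'a + 'a \<Rightarrow> real" where
  "frame_weight i = (case i of Inl _ \<Rightarrow> 1/16 | Inr _ \<Rightarrow> 1/32)"

lemma sum_frame: "i \<in> K <+> K \<Longrightarrow> (\<Sum>c\<in>C. frame i c) = 0"
  unfolding frame_def using sum_sign_diff sum_sign_avg by auto

lemma frame_reproducing:
  assumes i: "i \<in> K <+> K" and c: "c \<in> C"
  shows "(\<Sum>j\<in>K <+> K. frame_weight j * dot_C (frame i) (frame j) * frame j c) = frame i c"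
proof (cases i)
  case (Inl x)
  then have x: "x \<in> K" using i by auto
  have "(\<Sum>j\<in>K <+> K. frame_weight j * dot_C (frame i) (frame j) * frame j c)
      = (\<Sum>z\<in>K. 1/16 * (8 * delta x z - 8 * delta (antipode x) z) * sign_diff z c)
        + (\<Sum>z\<in>K. 1/32 * 0 * sign_avg z c)"
    using finite_K unfolding Inl frame_def frame_weight_def
    by (simp add: sum.Plus dot_C_sign_diff x)
  also have "\<dots> = (\<Sum>z\<in>K. delta x z * sign_diff z c) / 2
      - (\<Sum>z\<in>K. delta (antipode x) z * sign_diff z c) / 2"
    by (simp add: algebra_simps sum_subtractf sum_distrib_left sum_divide_distrib)
  also have "\<dots> = sign_diff x c"
    using sum_K_delta[OF x] sum_K_delta[OF antipode_in_K[OF x]] sign_diff_antipode[OF x]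
    by simp
  finally show ?thesis unfolding Inl frame_def by simp
next
  case (Inr x)
  then have x: "x \<in> K" using i by auto
  have "(\<Sum>j\<in>K <+> K. frame_weight j * dot_C (frame i) (frame j) * frame j c)
      = (\<Sum>z\<in>K. 1/16 * 0 * sign_diff z c)
        + (\<Sum>z\<in>K. 1/32 * (8 * delta x z + 8 * delta (antipode x) z - 8 * adj x z) * sign_avg z c)"
    using finite_K unfolding Inr frame_def frame_weight_def
    by (simp add: sum.Plus dot_C_sign_diff x)
  also have "\<dots> = (\<Sum>z\<in>K. delta x z * sign_avg z c) / 4
      + (\<Sum>z\<in>K. delta (antipode x) z * sign_avg z c) / 4 - (\<Sum>z\<in>K. adj x z * sign_avg z c) / 4"
    by (simp add: algebra_simps sum_subtractf sum.distrib sum_distrib_left sum_divide_distrib)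
  also have "\<dots> = sign_avg x c"
  proof -
    have "(\<Sum>z\<in>K_nbrs x. sign_avg z c) = - 2 * sign_avg x c"
      using sign_avg_nbr[OF x _ c] card_K_nbrs[OF x] by simp
    then show ?thesis
      using sum_K_delta[OF x] sum_K_delta[OF antipode_in_K[OF x]] sign_avg_antipode[OF x]
        sum_K_adj[of x "\<lambda>z. sign_avg z c"]
      by simp
  qed
  finally show ?thesis unfolding Inr frame_def by simp
qed

text \<open>Bessel's inequality for the frame, tested against the vector at p orthogonal to the
  all-ones vector.\<close>
lemma sum_sign_avg_sq_ge_10:
  assumes p: "p \<in> C"
  shows "10 \<le> (\<Sum>x\<in>K. (sign_avg x p)\<^sup>2)"
proof -
  define u :: "'a \<Rightarrow> real" where "u c = (if c = p then 1 else 0) - 1/16" for c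
  have u_frame: "(\<Sum>c\<in>C. u c * frame i c) = frame i p" if "i \<in> K <+> K" for i
    using sum_frame[OF that] sum_delta_mult[OF finite_C p, of "frame i"]
    unfolding u_def by (simp add: left_diff_distrib sum_subtractf sum_divide_distrib[symmetric])
  have "(\<Sum>c\<in>C. (u c)\<^sup>2) = (\<Sum>c\<in>C. 7/8 * (if c = p then 1 else 0) + 1/256)"
    unfolding u_def by (intro sum.cong refl) (simp add: power2_eq_square)
  also have "\<dots> = 15/16"
    using sum_delta_mult[OF finite_C p, of "\<lambda>_. 1"] card_C
    by (simp add: sum.distrib sum_distrib_left[symmetric] sum_divide_distrib[symmetric])
  finally have u_norm: "(\<Sum>c\<in>C. (u c)\<^sup>2) = 15/16" .
  have "(\<Sum>i\<in>K <+> K. frame_weight i * (\<Sum>c\<in>C. u c * frame i c)\<^sup>2) \<le> (\<Sum>c\<in>C. (u c)\<^sup>2)"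
    using bessel_inequality_reproducing[OF finite_C _ frame_reproducing[unfolded dot_C_def]]
      finite_K by simp
  also have "(\<Sum>i\<in>K <+> K. frame_weight i * (\<Sum>c\<in>C. u c * frame i c)\<^sup>2)
      = (\<Sum>x\<in>K. (sign_diff x p)\<^sup>2 / 16) + (\<Sum>x\<in>K. (sign_avg x p)\<^sup>2 / 32)"
  proof -
    have "(\<Sum>c\<in>C. u c * sign_diff x c) = sign_diff x p" "(\<Sum>c\<in>C. u c * sign_avg x c) = sign_avg x p"
      if "x \<in> K" for x
      using u_frame[of "Inl x"] u_frame[of "Inr x"] that unfolding frame_def by auto
    then show ?thesis using finite_K by (simp add: sum.Plus frame_def frame_weight_def)
  qed
  also have "(\<Sum>x\<in>K. (sign_diff x p)\<^sup>2 / 16) = (\<Sum>x\<in>K. (1 - (sign_avg x p)\<^sup>2) / 16)"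
    using sign_diff_sq_add_sign_avg_sq[of _ p] by (intro sum.cong refl) (simp add: algebra_simps)
  also have "\<dots> = (20 - (\<Sum>x\<in>K. (sign_avg x p)\<^sup>2)) / 16"
    using card_K by (simp add: sum_divide_distrib[symmetric] sum_subtractf)
  also have "(\<Sum>x\<in>K. (sign_avg x p)\<^sup>2 / 32) = (\<Sum>x\<in>K. (sign_avg x p)\<^sup>2) / 32"
    by (simp add: sum_divide_distrib)
  finally show ?thesis using u_norm by (simp add: field_simps)
qed

lemma sum_sum_sign_avg_sq: "(\<Sum>p\<in>C. \<Sum>x\<in>K. (sign_avg x p)\<^sup>2) = 160"
proof -
  have "(\<Sum>p\<in>C. \<Sum>x\<in>K. (sign_avg x p)\<^sup>2) = (\<Sum>x\<in>K. dot_C (sign_avg x) (sign_avg x))"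
    unfolding dot_C_def power2_eq_square by (rule sum.swap)
  also have "\<dots> = (\<Sum>x\<in>K. 8)"
  proof (intro sum.cong refl)
    fix x assume "x \<in> K"
    then show "dot_C (sign_avg x) (sign_avg x) = 8"
      using dot_C_sign_diff(2)[of x x] antipode_neq[of x] by (auto simp: delta_def)
  qed
  finally show ?thesis using card_K by simp
qed

lemma sum_sign_avg_sq_eq_10:
  assumes p: "p \<in> C"
  shows "(\<Sum>x\<in>K. (sign_avg x p)\<^sup>2) = 10"
proof -
  have "(\<Sum>p\<in>C. (\<Sum>x\<in>K. (sign_avg x p)\<^sup>2) - 10) = 0"
    using sum_sum_sign_avg_sq card_C by (simp add: sum_subtractf)
  then show ?thesis
    using sum_nonneg_eq_0_iff[OF finite_C, of "\<lambda>p. (\<Sum>x\<in>K. (sign_avg x p)\<^sup>2) - 10"]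
      sum_sign_avg_sq_ge_10 p by simp
qed

definition agree_set :: "'a \<Rightarrow> 'a set" where
  "agree_set p = {x\<in>K. sign_vec x p = sign_vec (antipode x) p}"

lemma card_agree_set:
  assumes p: "p \<in> C"
  shows "card (agree_set p) = 10"
proof -
  have "(sign_avg x p)\<^sup>2 = (if sign_vec x p = sign_vec (antipode x) p then 1 else 0)" for x
    using sign_vec_cases[of x p] sign_vec_cases[of "antipode x" p] unfolding sign_avg_def by auto
  then have "(\<Sum>x\<in>K. (sign_avg x p)\<^sup>2)
      = (\<Sum>x\<in>K. if sign_vec x p = sign_vec (antipode x) p then 1 else 0)"
    by simp
  then show ?thesis
    using sum_sign_avg_sq_eq_10[OF p] sum_indicator_card[OF finite_K] unfolding agree_set_def
    by simp
qed

lemma K_closed_agree_set: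
  assumes p: "p \<in> C"
  shows "K_closed (agree_set p)"
  unfolding K_closed_def
proof (intro conjI ballI impI)
  show "agree_set p \<subseteq> K" unfolding agree_set_def by auto
next
  fix x y assume x: "x \<in> agree_set p" and y: "y \<in> K" "E x y"
  then have xK: "x \<in> K" and "sign_vec x p = sign_vec (antipode x) p"
    unfolding agree_set_def by auto
  moreover have "y \<in> K_nbrs x" using y unfolding K_nbrs_def by simp
  ultimately have "sign_vec y p = sign_vec (antipode y) p"
    using sign_vec_square_sum[OF xK _ p] sign_vec_cases[of x p] sign_vec_cases[of y p]
      sign_vec_cases[of "antipode y" p] by fastforce
  then show "y \<in> agree_set p" unfolding agree_set_def using y by simp
qed

end

theorem mainTheorem17:
  fixes V :: "'a set" and E :: "'a \<Rightarrow> 'a \<Rightarrow> bool"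
  assumes "strongly_regular V E 76 30 8 14"
  shows "\<not> (\<exists>C. coclique V E C \<and> card C = 16)"
proof
  assume "\<exists>C. coclique V E C \<and> card C = 16"
  then obtain C where "coclique V E C" "card C = 16" by blast
  with assms interpret srg_coclique V E C by unfold_locales
  obtain x0 where "x0 \<in> D" using card_D by fastforce
  then interpret srg_coclique_class V E C x0 by unfold_locales
  obtain p where p: "p \<in> C" using C_nonempty by auto
  have "4 dvd card (agree_set p)" by (rule K_closed_card_dvd_4[OF K_closed_agree_set[OF p]])
  then show False using card_agree_set[OF p] by simp
qed

end
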